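(* A metrizable abelian topological group $G$ is NSS if and only if every absolutely Cauchy summable subset of $G$ is finite.
   Context: A topological group is NSS if it has a neighbourhood of the identity containing no non-trivial subgroup. A subset $A\subseteq G$ is absolutely Cauchy summable if for every neighbourhood $U$ of $0$ there is a finite $F\subseteq A$ such that the subgroup generated by $A\setminus F$ is contained in $U$. *)

theory Defs
  imports "HOL-Analysis.Analysis"
begin

definition is_add_subgroup :: "'a::group_add set \<Rightarrow> bool" where
  "is_add_subgroup H \<longleftrightarrow> 0 \<in> H \<and> (\<forall>x\<in>H. \<forall>y\<in>H. x + y \<in> H) \<and> (\<forall>x\<in>H. - x \<in> H)"

definition subgroup_generated :: "'a::group_add set \<Rightarrow> 'a set" where
  "subgroup_generated A = \<Inter>{H. is_add_subgroup H \<and> A \<subseteq> H}"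

definition nbhd0 :: "'a::{topological_space,zero} set \<Rightarrow> bool" where
  "nbhd0 U \<longleftrightarrow> (\<exists>V. open V \<and> 0 \<in> V \<and> V \<subseteq> U)"

definition NSS :: "'a::topological_group_add itself \<Rightarrow> bool" where
  "NSS _ \<longleftrightarrow> (\<exists>U::'a set. nbhd0 U \<and> (\<forall>H. is_add_subgroup H \<and> H \<subseteq> U \<longrightarrow> H = {0}))"

definition abs_cauchy_summable :: "'a::topological_group_add set \<Rightarrow> bool" where
  "abs_cauchy_summable A \<longleftrightarrow>
     (\<forall>U. nbhd0 U \<longrightarrow> (\<exists>F. finite F \<and> F \<subseteq> A \<and> subgroup_generated (A - F) \<subseteq> U))"

end

theory Submission
  imports Defs
begin

text \<open>If \<open>U\<close> is a neighbourhood of 0 containing no non-trivial subgroup and \<open>A\<close> is absolutely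
  Cauchy summable, then \<open>A - F \<subseteq> \<langle>A - F\<rangle> \<subseteq> U\<close> for some finite \<open>F\<close>, so \<open>A \<subseteq> F \<union> {0}\<close>.

  Conversely, first countability yields a neighbourhood base \<open>V\<^sub>0, V\<^sub>1, \<dots>\<close> of 0 with
  \<open>V\<^sub>n\<^sub>+\<^sub>1 + V\<^sub>n\<^sub>+\<^sub>1 \<subseteq> V\<^sub>n\<close>. If the group is not NSS, pick non-zero \<open>x\<^sub>n\<close> in non-trivial subgroups
  \<open>H\<^sub>n \<subseteq> V\<^sub>n\<^sub>+\<^sub>1\<close>. In an abelian group the finite sums \<open>h\<^sub>N + \<dots> + h\<^sub>N\<^sub>+\<^sub>k\<close> with \<open>h\<^sub>m \<in> H\<^sub>m\<close> form a
  subgroup, which lies in \<open>V\<^sub>N\<close> by the halving property; it contains all \<open>x\<^sub>n\<close> with \<open>n \<ge> N\<close>, so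
  \<open>{x\<^sub>n}\<close> is absolutely Cauchy summable. It is infinite because \<open>x\<^sub>n \<rightarrow> 0\<close> while \<open>x\<^sub>n \<noteq> 0\<close>, and
  finite sets are closed in a \<open>T\<^sub>1\<close> space.\<close>

lemma is_add_subgroup_subgroup_generated: "is_add_subgroup (subgroup_generated A)"
  unfolding is_add_subgroup_def subgroup_generated_def by auto

lemma subgroup_generated_superset: "A \<subseteq> subgroup_generated A"
  unfolding subgroup_generated_def by auto

lemma subgroup_generated_minimal:
  "is_add_subgroup H \<Longrightarrow> A \<subseteq> H \<Longrightarrow> subgroup_generated A \<subseteq> H"
  unfolding subgroup_generated_def by auto

lemma open_zero_halving:
  fixes V :: "'a::topological_monoid_add set"
  assumes "open V" "0 \<in> V"
  obtains W where "open W" "0 \<in> W" "\<And>a b. a \<in> W \<Longrightarrow> b \<in> W \<Longrightarrow> a + b \<in> V"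
proof -
  have "open ((\<lambda>p. fst p + snd p) -` V)"
    using assms(1) by (intro open_vimage continuous_intros)
  moreover have "(0, 0) \<in> (\<lambda>p. fst p + snd p) -` V"
    using assms(2) by simp
  ultimately obtain W1 W2 where "open W1" "open W2" "(0, 0) \<in> W1 \<times> W2"
      and "W1 \<times> W2 \<subseteq> (\<lambda>p. fst p + snd p) -` V"
    by (rule open_prod_elim)
  then show thesis
    by (intro that[of "W1 \<inter> W2"]) auto
qed

lemma first_countable_nhds_sequence:
  fixes x :: "'a::topological_space"
  assumes "first_countable (euclidean :: 'a topology)"
  obtains B :: "nat \<Rightarrow> 'a set"
  where "\<And>n. open (B n)" "\<And>n. x \<in> B n" "\<And>U. open U \<Longrightarrow> x \<in> U \<Longrightarrow> \<exists>n. B n \<subseteq> U"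
proof -
  have "\<exists>\<B>. countable \<B> \<and> (\<forall>V\<in>\<B>. openin euclidean V) \<and>
      (\<forall>U. openin euclidean U \<and> x \<in> U \<longrightarrow> (\<exists>V\<in>\<B>. x \<in> V \<and> V \<subseteq> U))"
    using assms unfolding first_countable_def by simp
  then obtain \<B> where "countable \<B>" "\<And>V. V \<in> \<B> \<Longrightarrow> open V"
    and basis: "\<And>U. open U \<Longrightarrow> x \<in> U \<Longrightarrow> \<exists>V\<in>\<B>. x \<in> V \<and> V \<subseteq> U"
    by auto
  define \<B>\<^sub>x where "\<B>\<^sub>x = {V \<in> \<B>. x \<in> V}"
  have "countable \<B>\<^sub>x" "\<B>\<^sub>x \<noteq> {}"
    using \<open>countable \<B>\<close> basis[of UNIV] by (auto simp: \<B>\<^sub>x_def)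
  show thesis
  proof (rule that[of "from_nat_into \<B>\<^sub>x"])
    show "open (from_nat_into \<B>\<^sub>x n)" "x \<in> from_nat_into \<B>\<^sub>x n" for n
      using from_nat_into[OF \<open>\<B>\<^sub>x \<noteq> {}\<close>, of n] \<open>\<And>V. V \<in> \<B> \<Longrightarrow> open V\<close>
      by (auto simp: \<B>\<^sub>x_def)
    show "\<exists>n. from_nat_into \<B>\<^sub>x n \<subseteq> U" if U: "open U" "x \<in> U" for U
    proof -
      obtain V where "V \<in> \<B>\<^sub>x" "V \<subseteq> U"
        using basis[OF U] by (auto simp: \<B>\<^sub>x_def)
      then obtain n where "from_nat_into \<B>\<^sub>x n = V"
        using from_nat_into_surj[OF \<open>countable \<B>\<^sub>x\<close>] by blast
      with \<open>V \<subseteq> U\<close> show ?thesis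
        by blast
    qed
  qed
qed

lemma halving_nhds_chain:
  assumes "first_countable (euclidean :: 'a::topological_monoid_add topology)"
  obtains V :: "nat \<Rightarrow> 'a::topological_monoid_add set"
  where "\<And>n. open (V n)" "\<And>n. 0 \<in> V n"
    "\<And>n a b. a \<in> V (Suc n) \<Longrightarrow> b \<in> V (Suc n) \<Longrightarrow> a + b \<in> V n"
    "\<And>U. open U \<Longrightarrow> 0 \<in> U \<Longrightarrow> \<exists>n. V n \<subseteq> U"
proof -
  obtain B :: "nat \<Rightarrow> 'a set" where B: "\<And>n. open (B n)" "\<And>n. 0 \<in> B n"
    and B_basis: "\<And>U. open U \<Longrightarrow> 0 \<in> U \<Longrightarrow> \<exists>n. B n \<subseteq> U"
    using first_countable_nhds_sequence[OF assms, of 0] by blast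
  define half :: "'a set \<Rightarrow> 'a set" where
    "half U = (SOME W. open W \<and> 0 \<in> W \<and> (\<forall>a\<in>W. \<forall>b\<in>W. a + b \<in> U))" for U
  have half: "open (half U)" "0 \<in> half U" "\<And>a b. a \<in> half U \<Longrightarrow> b \<in> half U \<Longrightarrow> a + b \<in> U"
    if U: "open U" "0 \<in> U" for U
  proof -
    obtain W where "open W" "0 \<in> W" "\<And>a b. a \<in> W \<Longrightarrow> b \<in> W \<Longrightarrow> a + b \<in> U"
      using open_zero_halving[OF U] by blast
    then have "open W \<and> 0 \<in> W \<and> (\<forall>a\<in>W. \<forall>b\<in>W. a + b \<in> U)"
      by blast
    from someI[of "\<lambda>W. open W \<and> 0 \<in> W \<and> (\<forall>a\<in>W. \<forall>b\<in>W. a + b \<in> U)", OF this]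
    show "open (half U)" "0 \<in> half U" "\<And>a b. a \<in> half U \<Longrightarrow> b \<in> half U \<Longrightarrow> a + b \<in> U"
      unfolding half_def by auto
  qed
  define V where "V = rec_nat UNIV (\<lambda>n W. half (W \<inter> B n))"
  have V_Suc: "V (Suc n) = half (V n \<inter> B n)" for n
    by (simp add: V_def)
  have V_nhds: "open (V n) \<and> 0 \<in> V n" for n
  proof (induction n)
    case 0
    then show ?case by (simp add: V_def)
  next
    case (Suc n)
    then show ?case
      using half[of "V n \<inter> B n"] B[of n] by (simp add: V_Suc open_Int)
  qed
  have V_add: "a + b \<in> V n \<inter> B n" if "a \<in> V (Suc n)" "b \<in> V (Suc n)" for n a b
    using half(3)[of "V n \<inter> B n"] V_nhds[of n] B[of n] that by (auto simp: V_Suc)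
  show thesis
  proof (rule that)
    show "open (V n)" "0 \<in> V n" for n
      using V_nhds by blast+
    show "a + b \<in> V n" if "a \<in> V (Suc n)" "b \<in> V (Suc n)" for n a b
      using V_add[OF that] by blast
    show "\<exists>n. V n \<subseteq> U" if U: "open U" "0 \<in> U" for U
    proof -
      obtain n where "B n \<subseteq> U"
        using B_basis[OF U] by blast
      moreover have "V (Suc n) \<subseteq> B n"
        using V_add[of _ n 0] V_nhds[of "Suc n"] by auto
      ultimately show ?thesis by blast
    qed
  qed
qed

lemma sum_mem_halving_chain:
  fixes V :: "nat \<Rightarrow> 'a::comm_monoid_add set"
  assumes "\<And>n. 0 \<in> V n" "\<And>n a b. a \<in> V (Suc n) \<Longrightarrow> b \<in> V (Suc n) \<Longrightarrow> a + b \<in> V n"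
    and "\<And>m. y m \<in> V (Suc m)"
  shows "(\<Sum>m\<in>{N..<N+k}. y m) \<in> V N"
proof (induction k arbitrary: N)
  case 0
  then show ?case using assms(1) by simp
next
  case (Suc k)
  have "(\<Sum>m\<in>{N..<N+Suc k}. y m) = y N + (\<Sum>m\<in>{Suc N..<Suc N+k}. y m)"
    by (subst sum.atLeast_Suc_lessThan) auto
  then show ?case
    using assms(2)[OF assms(3) Suc[of "Suc N"]] by simp
qed

definition tail_sums :: "(nat \<Rightarrow> 'a::comm_monoid_add set) \<Rightarrow> nat \<Rightarrow> 'a set" where
  "tail_sums H N = {\<Sum>m\<in>{N..<N+k}. y m | k y. \<forall>m. y m \<in> H m}"

lemma sum_truncate_atLeastLessThan:
  fixes y :: "nat \<Rightarrow> 'a::comm_monoid_add"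
  assumes "k \<le> K"
  shows "(\<Sum>m\<in>{N..<N+K}. if m < N + k then y m else 0) = (\<Sum>m\<in>{N..<N+k}. y m)"
proof -
  have "{N..<N+K} \<inter> {..<N+k} = {N..<N+k}"
    using assms by auto
  then show ?thesis
    using sum.inter_restrict[of "{N..<N+K}" y "{..<N+k}"] by simp
qed

lemma tail_sumsI: "\<forall>m. y m \<in> H m \<Longrightarrow> (\<Sum>m\<in>{N..<N+k}. y m) \<in> tail_sums H N"
  unfolding tail_sums_def by blast

lemma tail_sumsE:
  assumes "a \<in> tail_sums H N"
  obtains k y where "\<forall>m. y m \<in> H m" "a = (\<Sum>m\<in>{N..<N+k}. y m)"
  using assms unfolding tail_sums_def by blast

lemma is_add_subgroup_tail_sums:
  fixes H :: "nat \<Rightarrow> 'a::ab_group_add set"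
  assumes "\<And>n. is_add_subgroup (H n)"
  shows "is_add_subgroup (tail_sums H N)"
  unfolding is_add_subgroup_def
proof (intro conjI ballI)
  have H_zero: "0 \<in> H m" and H_add: "\<And>a b. a \<in> H m \<Longrightarrow> b \<in> H m \<Longrightarrow> a + b \<in> H m"
    and H_minus: "\<And>a. a \<in> H m \<Longrightarrow> - a \<in> H m" for m
    using assms[of m] unfolding is_add_subgroup_def by blast+
  show "0 \<in> tail_sums H N"
    using tail_sumsI[of "\<lambda>_. 0" H N 0] H_zero by simp
  show "a + b \<in> tail_sums H N" if a: "a \<in> tail_sums H N" and b: "b \<in> tail_sums H N" for a b
  proof -
    obtain k y where y: "\<forall>m. y m \<in> H m" "a = (\<Sum>m\<in>{N..<N+k}. y m)"
      using a by (rule tail_sumsE)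
    obtain k' y' where y': "\<forall>m. y' m \<in> H m" "b = (\<Sum>m\<in>{N..<N+k'}. y' m)"
      using b by (rule tail_sumsE)
    define z where "z m = (if m < N + k then y m else 0) + (if m < N + k' then y' m else 0)" for m
    have "a + b = (\<Sum>m\<in>{N..<N + max k k'}. z m)"
      unfolding z_def sum.distrib y(2) y'(2)
      by (simp only: sum_truncate_atLeastLessThan max.cobounded1 max.cobounded2)
    moreover have "z m \<in> H m" for m
      using y(1) y'(1) H_zero H_add by (simp add: z_def)
    ultimately show ?thesis
      using tail_sumsI[of z] by simp
  qed
  show "- a \<in> tail_sums H N" if a: "a \<in> tail_sums H N" for a
  proof -
    obtain k y where y: "\<forall>m. y m \<in> H m" "a = (\<Sum>m\<in>{N..<N+k}. y m)"
      using a by (rule tail_sumsE)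
    have "- a = (\<Sum>m\<in>{N..<N+k}. - y m)"
      by (simp add: y(2) sum_negf)
    then show ?thesis
      using tail_sumsI[of "\<lambda>m. - y m" H N k] y(1) H_minus by simp
  qed
qed

lemma subset_tail_sums:
  fixes H :: "nat \<Rightarrow> 'a::comm_monoid_add set"
  assumes "\<And>m. 0 \<in> H m" "N \<le> n"
  shows "H n \<subseteq> tail_sums H N"
proof
  fix x assume "x \<in> H n"
  let ?y = "\<lambda>m. if m = n then x else 0"
  have "x = (\<Sum>m\<in>{N..<N + (Suc n - N)}. ?y m)"
    using assms(2) by simp
  moreover have "\<forall>m. ?y m \<in> H m"
    using \<open>x \<in> H n\<close> assms(1) by simp
  ultimately show "x \<in> tail_sums H N"
    using tail_sumsI[of ?y H N] by metis
qed

lemma tail_sums_subset_halving_chain: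
  fixes V :: "nat \<Rightarrow> 'a::comm_monoid_add set"
  assumes "\<And>n. 0 \<in> V n" "\<And>n a b. a \<in> V (Suc n) \<Longrightarrow> b \<in> V (Suc n) \<Longrightarrow> a + b \<in> V n"
    and "\<And>m. H m \<subseteq> V (Suc m)"
  shows "tail_sums H N \<subseteq> V N"
proof
  fix a assume "a \<in> tail_sums H N"
  then obtain k y where "\<forall>m. y m \<in> H m" "a = (\<Sum>m\<in>{N..<N+k}. y m)"
    by (rule tail_sumsE)
  then show "a \<in> V N"
    using sum_mem_halving_chain[of V y N k] assms by blast
qed

lemma t1_space_open_Compl_finite:
  fixes A :: "'a::topological_space set"
  assumes "t1_space (euclidean :: 'a topology)" "finite A"
  shows "open (- A)"
proof -
  have "closedin euclidean A"
    using assms unfolding t1_space_closedin_finite by simp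
  then show ?thesis
    unfolding closed_closedin[symmetric] by (rule open_Compl)
qed

lemma NSS_imp_abs_cauchy_summable_finite:
  fixes A :: "'a::topological_group_add set"
  assumes "NSS TYPE('a)" "abs_cauchy_summable A"
  shows "finite A"
proof -
  obtain U :: "'a set" where "nbhd0 U" and U: "\<And>H. is_add_subgroup H \<Longrightarrow> H \<subseteq> U \<Longrightarrow> H = {0}"
    using assms(1) unfolding NSS_def by blast
  obtain F where "finite F" "subgroup_generated (A - F) \<subseteq> U"
    using assms(2) \<open>nbhd0 U\<close> unfolding abs_cauchy_summable_def by blast
  then have "subgroup_generated (A - F) = {0}"
    using U is_add_subgroup_subgroup_generated by blast
  then have "A \<subseteq> insert 0 F"
    using subgroup_generated_superset[of "A - F"] by auto
  then show ?thesis
    using \<open>finite F\<close> by (rule finite_subset[OF _ finite_insert[THEN iffD2]])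
qed

lemma not_NSS_imp_infinite_abs_cauchy_summable:
  assumes "first_countable (euclidean :: 'a::topological_ab_group_add topology)"
    and "t1_space (euclidean :: 'a topology)" and "\<not> NSS TYPE('a)"
  obtains A :: "'a::topological_ab_group_add set" where "abs_cauchy_summable A" "infinite A"
proof -
  obtain V :: "nat \<Rightarrow> 'a set" where V_open: "\<And>n. open (V n)" and V_zero: "\<And>n. 0 \<in> V n"
    and V_add: "\<And>n a b. a \<in> V (Suc n) \<Longrightarrow> b \<in> V (Suc n) \<Longrightarrow> a + b \<in> V n"
    and V_basis: "\<And>U. open U \<Longrightarrow> 0 \<in> U \<Longrightarrow> \<exists>n. V n \<subseteq> U"
    using halving_nhds_chain[OF assms(1)] by blast
  have "nbhd0 (V (Suc n))" for n
    using V_open V_zero unfolding nbhd0_def by blast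
  then have "\<exists>K. is_add_subgroup K \<and> K \<subseteq> V (Suc n) \<and> K \<noteq> {0}" for n
    using assms(3) unfolding NSS_def by blast
  then obtain H where H: "\<And>n. is_add_subgroup (H n)" "\<And>n. H n \<subseteq> V (Suc n)" "\<And>n. H n \<noteq> {0}"
    by metis
  have H_zero: "0 \<in> H n" for n
    using H(1) unfolding is_add_subgroup_def by blast
  have "\<exists>a. a \<in> H n \<and> a \<noteq> 0" for n
    using H(3) H_zero by blast
  then obtain x where x: "\<And>n. x n \<in> H n" "\<And>n. x n \<noteq> 0"
    by metis
  show thesis
  proof
    show "abs_cauchy_summable (range x)"
      unfolding abs_cauchy_summable_def
    proof (intro allI impI)
      fix U :: "'a set" assume "nbhd0 U"
      then obtain W where "open W" "0 \<in> W" "W \<subseteq> U"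
        unfolding nbhd0_def by blast
      then obtain N where "V N \<subseteq> U"
        using V_basis[of W] by blast
      have "range x - x ` {..<N} \<subseteq> tail_sums H N"
      proof
        fix a assume a: "a \<in> range x - x ` {..<N}"
        then obtain n where n: "a = x n"
          by blast
        with a have "N \<le> n"
          by (metis DiffD2 imageI lessThan_iff not_le)
        then show "a \<in> tail_sums H N"
          unfolding n by (rule subsetD[OF subset_tail_sums[OF H_zero] x(1)])
      qed
      then have "subgroup_generated (range x - x ` {..<N}) \<subseteq> tail_sums H N"
        by (rule subgroup_generated_minimal[OF is_add_subgroup_tail_sums[OF H(1)]])
      also have "\<dots> \<subseteq> V N"
        by (rule tail_sums_subset_halving_chain[of V H, OF V_zero V_add H(2)])
      finally have "subgroup_generated (range x - x ` {..<N}) \<subseteq> V N" .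
      with \<open>V N \<subseteq> U\<close> show "\<exists>F. finite F \<and> F \<subseteq> range x \<and> subgroup_generated (range x - F) \<subseteq> U"
        by (intro exI[of _ "x ` {..<N}"]) auto
    qed
    show "infinite (range x)"
    proof
      assume "finite (range x)"
      then have "open (- range x)"
        by (rule t1_space_open_Compl_finite[OF assms(2)])
      moreover have "0 \<in> - range x"
        using x(2) by auto
      ultimately obtain N where "V N \<subseteq> - range x"
        using V_basis by blast
      moreover have "x N + 0 \<in> V N"
        by (rule V_add[OF subsetD[OF H(2) x(1)] V_zero])
      ultimately show False by auto
    qed
  qed
qed

theorem theorem8p1:
  assumes "metrizable_space (euclidean :: 'a::topological_ab_group_add topology)"
  shows "NSS TYPE('a) \<longleftrightarrow> (\<forall>A::'a set. abs_cauchy_summable A \<longrightarrow> finite A)"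
proof
  show "\<forall>A::'a set. abs_cauchy_summable A \<longrightarrow> finite A" if "NSS TYPE('a)"
    using NSS_imp_abs_cauchy_summable_finite[OF that] by blast
  show "NSS TYPE('a)" if finite: "\<forall>A::'a set. abs_cauchy_summable A \<longrightarrow> finite A"
  proof (rule ccontr)
    assume "\<not> NSS TYPE('a)"
    then obtain A :: "'a set" where "abs_cauchy_summable A" "infinite A"
      using not_NSS_imp_infinite_abs_cauchy_summable metrizable_imp_first_countable[OF assms]
        metrizable_imp_t1_space[OF assms] by blast
    with finite show False by blast
  qed
qed

end
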